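(* Let $K$ and $L$ be fields and let $\sigma_1,\ldots,\sigma_n\colon K\to L$ be field monomorphisms. Suppose that $$\sum_{g\in S_n}\prod_{i=1}^n\sigma_{g(i)}(x_i)=0\quad\text{for all }x_1,\ldots,x_n\in K.$$ Then $\operatorname{char}K=p>0$ and there exist indices $1\le i_1<\cdots<i_p\le n$ with $\sigma_{i_1}=\cdots=\sigma_{i_p}$. *)

theory Defs
  imports "HOL-Combinatorics.Permutations"
begin

definition field_mono :: "('k::field \<Rightarrow> 'l::field) \<Rightarrow> bool" where
  "field_mono f \<longleftrightarrow> f 1 = 1 \<and> (\<forall>x y. f (x + y) = f x + f y)
     \<and> (\<forall>x y. f (x * y) = f x * f y) \<and> inj f"

end

theory Submission
  imports Defs
begin

text \<open>
  Expanding the permanent of the matrix \<open>(\<sigma>\<^sub>j(x\<^sub>i))\<close> along the row of \<open>x\<^sub>a\<close> writes it as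
  \<open>\<Sum>\<^sub>j \<sigma>\<^sub>j(x\<^sub>a) c\<^sub>j\<close>, where the cofactors \<open>c\<^sub>j\<close> do not depend on \<open>x\<^sub>a\<close>. If this vanishes for
  all \<open>x\<^sub>a\<close>, Dedekind's independence of characters forces, for each distinct embedding \<open>\<tau>\<close>,
  the sum of the \<open>c\<^sub>j\<close> with \<open>\<sigma>\<^sub>j = \<tau>\<close> to vanish. Cofactors of equal columns coincide, so
  \<open>m \<cdot> c\<^sub>a = 0\<close> where \<open>m\<close> is the multiplicity of \<open>\<sigma>\<^sub>a\<close>. Either \<open>m = 0\<close> in the field, so the
  characteristic divides \<open>m\<close> and \<open>\<sigma>\<^sub>a\<close> occurs at least \<open>char K\<close> times, or \<open>c\<^sub>a\<close>, which is
  the permanent of the minor, vanishes identically and we conclude by induction.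
\<close>

lemma multiplicative_maps_linearly_independent:
  fixes F :: "('k::monoid_mult \<Rightarrow> 'l::idom) set"
  assumes "finite F"
    and "\<And>f. f \<in> F \<Longrightarrow> f 1 = 1"
    and "\<And>f x y. f \<in> F \<Longrightarrow> f (x * y) = f x * f y"
    and "\<And>t. (\<Sum>f\<in>F. f t * d f) = 0"
  shows "\<forall>f\<in>F. d f = 0"
  using assms
proof (induction F arbitrary: d rule: finite_induct)
  case empty
  then show ?case by simp
next
  case (insert f0 F)
  have mult: "\<And>f x y. f \<in> insert f0 F \<Longrightarrow> f (x * y) = f x * f y"
    using insert.prems(2) .
  have rel: "f0 t * d f0 = - (\<Sum>f\<in>F. f t * d f)" for t
    using insert.prems(3)[of t] insert.hyps by (simp add: eq_neg_iff_add_eq_0)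
  \<comment> \<open>Subtracting \<open>f\<^sub>0(s)\<close> times the relation at \<open>t\<close> from the relation at \<open>st\<close>
     eliminates \<open>f\<^sub>0\<close>.\<close>
  have shorter: "\<forall>f\<in>F. (f s - f0 s) * d f = 0" for s
  proof -
    have "(\<Sum>f\<in>F. f t * ((f s - f0 s) * d f)) = 0" for t
    proof -
      have "(\<Sum>f\<in>F. f t * ((f s - f0 s) * d f))
          = (\<Sum>f\<in>F. f (s * t) * d f) - f0 s * (\<Sum>f\<in>F. f t * d f)"
        by (simp add: mult sum_subtractf sum_distrib_left algebra_simps)
      also have "\<dots> = f0 s * (f0 t * d f0) - f0 (s * t) * d f0"
        by (simp add: rel)
      also have "\<dots> = 0"
        by (simp add: mult)
      finally show ?thesis .
    qed
    then show ?thesis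
      using insert.IH[of "\<lambda>f. (f s - f0 s) * d f"] insert.prems by blast
  qed
  have dF: "\<forall>f\<in>F. d f = 0"
  proof
    fix f assume "f \<in> F"
    with insert.hyps have "f \<noteq> f0" by blast
    then obtain s where "f s \<noteq> f0 s" by blast
    with shorter[of s] \<open>f \<in> F\<close> show "d f = 0" by auto
  qed
  moreover have "d f0 = 0"
    using rel[of 1] insert.prems(1)[of f0] dF by simp
  ultimately show ?case by blast
qed

lemma field_mono_of_nat:
  assumes "field_mono (f :: 'k::field \<Rightarrow> 'l::field)"
  shows "f (of_nat m) = of_nat m"
proof -
  have add: "\<And>x y. f (x + y) = f x + f y" and one: "f 1 = 1"
    using assms by (auto simp: field_mono_def)
  have "f 0 + 0 = f 0 + f 0"
    using add[of 0 0] by simp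
  then have "f 0 = 0"
    by (metis add_left_cancel)
  then show ?thesis
    by (induction m) (simp_all add: add one)
qed

lemma field_mono_CHAR_eq:
  assumes "field_mono (f :: 'k::field \<Rightarrow> 'l::field)"
  shows "CHAR('k) = CHAR('l)"
proof -
  have "of_nat m = (0::'k) \<longleftrightarrow> of_nat m = (0::'l)" for m
    using assms field_mono_of_nat[OF assms, of m] field_mono_of_nat[OF assms, of 0]
    by (auto simp: field_mono_def inj_def)
  then show ?thesis
    by (intro CHAR_eqI) (auto simp: of_nat_eq_0_iff_char_dvd)
qed

definition permanent :: "'a set \<Rightarrow> ('a \<Rightarrow> 'a \<Rightarrow> 'r::comm_semiring_1) \<Rightarrow> 'r" where
  "permanent A M = (\<Sum>p | p permutes A. \<Prod>i\<in>A. M i (p i))"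

definition perm_cofactor :: "'a set \<Rightarrow> ('a \<Rightarrow> 'a \<Rightarrow> 'r::comm_semiring_1) \<Rightarrow> 'a \<Rightarrow> 'a \<Rightarrow> 'r" where
  "perm_cofactor A M a j = (\<Sum>p | p permutes A \<and> p a = j. \<Prod>i\<in>A - {a}. M i (p i))"

lemma permanent_empty [simp]: "permanent {} M = 1"
proof -
  have "{p. p permutes ({}::'a set)} = {id}"
    by auto
  then show ?thesis
    by (simp add: permanent_def)
qed

lemma permanent_row_expansion:
  assumes "finite A" "a \<in> A"
  shows "permanent A M = (\<Sum>j\<in>A. M a j * perm_cofactor A M a j)"
proof -
  have "permanent A M = (\<Sum>p | p permutes A. M a (p a) * (\<Prod>i\<in>A - {a}. M i (p i)))"
    unfolding permanent_def by (rule sum.cong) (auto simp: prod.remove[OF assms])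
  also have "\<dots> = (\<Sum>j\<in>A. \<Sum>p\<in>{p \<in> {p. p permutes A}. p a = j}.
                      M a (p a) * (\<Prod>i\<in>A - {a}. M i (p i)))"
    by (rule sum.group[symmetric])
      (auto simp: finite_permutations assms permutes_in_image)
  also have "\<dots> = (\<Sum>j\<in>A. M a j * perm_cofactor A M a j)"
    unfolding perm_cofactor_def by (auto simp: sum_distrib_left intro!: sum.cong)
  finally show ?thesis .
qed

lemma perm_cofactor_fun_upd_row [simp]:
  "perm_cofactor A (M(a := r)) a j = perm_cofactor A M a j"
  unfolding perm_cofactor_def by (intro sum.cong prod.cong) auto

lemma perm_cofactor_equal_columns:
  assumes "a \<in> A" "j \<in> A" "\<And>i. M i j = M i a"
  shows "perm_cofactor A M a j = perm_cofactor A M a a"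
proof -
  have swap: "M i (transpose a j k) = M i k" for i k
    using assms(3) by (auto simp: transpose_def)
  show ?thesis
    unfolding perm_cofactor_def
    by (rule sum.reindex_bij_witness[of _ "\<lambda>p. transpose a j \<circ> p" "\<lambda>p. transpose a j \<circ> p"])
      (auto simp: swap fun_eq_iff assms permutes_in_image
            intro!: permutes_compose permutes_swap_id)
qed

lemma permutes_fixing_iff_permutes_remove:
  "p permutes A \<and> p a = a \<longleftrightarrow> p permutes A - {a}"
proof
  assume "p permutes A \<and> p a = a"
  then show "p permutes A - {a}"
    unfolding permutes_def by auto
next
  assume "p permutes A - {a}"
  then show "p permutes A \<and> p a = a"
    by (auto intro: permutes_subset permutes_not_in)
qed

lemma perm_cofactor_diagonal:
  "perm_cofactor A M a a = permanent (A - {a}) M"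
  unfolding perm_cofactor_def permanent_def
  by (simp add: permutes_fixing_iff_permutes_remove)

lemma permanent_of_characters_minor:
  fixes \<sigma> :: "'a \<Rightarrow> 'k::monoid_mult \<Rightarrow> 'l::idom"
  assumes "finite A" "a \<in> A"
    and one: "\<And>i. i \<in> A \<Longrightarrow> \<sigma> i 1 = 1"
    and mult: "\<And>i s t. i \<in> A \<Longrightarrow> \<sigma> i (s * t) = \<sigma> i s * \<sigma> i t"
    and vanish: "\<And>x. permanent A (\<lambda>i j. \<sigma> j (x i)) = 0"
  shows "of_nat (card {j\<in>A. \<sigma> j = \<sigma> a}) * permanent (A - {a}) (\<lambda>i j. \<sigma> j (x i)) = 0"
proof -
  define M where "M = (\<lambda>i j. \<sigma> j (x i))"
  define d where "d \<tau> = (\<Sum>j | j \<in> A \<and> \<sigma> j = \<tau>. perm_cofactor A M a j)" for \<tau>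
  have "(\<Sum>\<tau>\<in>\<sigma> ` A. \<tau> t * d \<tau>) = 0" for t
  proof -
    have row: "(\<lambda>i j. \<sigma> j ((x(a := t)) i)) = M(a := (\<lambda>j. \<sigma> j t))"
      by (auto simp: M_def fun_eq_iff)
    have "(\<Sum>\<tau>\<in>\<sigma> ` A. \<tau> t * d \<tau>)
        = (\<Sum>\<tau>\<in>\<sigma> ` A. \<Sum>j | j \<in> A \<and> \<sigma> j = \<tau>. \<sigma> j t * perm_cofactor A M a j)"
      unfolding d_def sum_distrib_left by (intro sum.cong) auto
    also have "\<dots> = (\<Sum>j\<in>A. \<sigma> j t * perm_cofactor A M a j)"
      by (rule sum.group) (auto simp: assms(1))
    also have "\<dots> = permanent A (\<lambda>i j. \<sigma> j ((x(a := t)) i))"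
      unfolding row by (simp add: permanent_row_expansion[OF assms(1,2)])
    also have "\<dots> = 0"
      by (rule vanish)
    finally show ?thesis .
  qed
  then have "\<forall>\<tau>\<in>\<sigma> ` A. d \<tau> = 0"
    using assms(1) one mult by (intro multiplicative_maps_linearly_independent) auto
  then have "d (\<sigma> a) = 0"
    using assms(2) by blast
  moreover have "d (\<sigma> a) = (\<Sum>j | j \<in> A \<and> \<sigma> j = \<sigma> a. perm_cofactor A M a a)"
    unfolding d_def
    by (intro sum.cong refl perm_cofactor_equal_columns assms(2)) (auto simp: M_def)
  ultimately show ?thesis
    by (simp add: perm_cofactor_diagonal M_def)
qed

lemma CHAR_pos_subset_of_card:
  assumes "finite J" "J \<noteq> {}" "of_nat (card J) = (0::'r::semiring_1)"
  shows "CHAR('r) > 0 \<and> (\<exists>I\<subseteq>J. card I = CHAR('r))"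
proof -
  have "CHAR('r) dvd card J" "card J > 0"
    using assms by (simp_all add: of_nat_eq_0_iff_char_dvd card_gt_0_iff)
  then have "CHAR('r) > 0" "CHAR('r) \<le> card J"
    by (auto intro: dvd_imp_le)
  then show ?thesis
    by (meson obtain_subset_with_card_n)
qed

lemma permanent_of_embeddings_eq_0_imp_repeated:
  fixes \<sigma> :: "'a \<Rightarrow> 'k::field \<Rightarrow> 'l::field"
  assumes "finite A"
    and "\<And>i. i \<in> A \<Longrightarrow> field_mono (\<sigma> i)"
    and "\<And>x. permanent A (\<lambda>i j. \<sigma> j (x i)) = 0"
  shows "CHAR('k) > 0 \<and> (\<exists>I\<subseteq>A. card I = CHAR('k) \<and> (\<forall>i\<in>I. \<forall>j\<in>I. \<sigma> i = \<sigma> j))"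
  using assms
proof (induction A rule: finite_remove_induct)
  case empty
  then show ?case by simp
next
  case (remove A)
  then obtain a where a: "a \<in> A" by blast
  define J where "J = {j\<in>A. \<sigma> j = \<sigma> a}"
  have minor: "of_nat (card J) * permanent (A - {a}) (\<lambda>i j. \<sigma> j (x i)) = 0" for x
    unfolding J_def using remove.hyps(1) a remove.prems
    by (intro permanent_of_characters_minor) (auto simp: field_mono_def)
  show ?case
  proof (cases "of_nat (card J) = (0::'l)")
    case True
    have "CHAR('k) = CHAR('l)"
      using field_mono_CHAR_eq remove.prems(1) a by blast
    moreover have "finite J" "J \<noteq> {}" "J \<subseteq> A"
      using remove.hyps(1) a by (auto simp: J_def)
    ultimately obtain I where "CHAR('k) > 0" "I \<subseteq> J" "card I = CHAR('k)"
      using CHAR_pos_subset_of_card[OF _ _ True] by auto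
    moreover have "\<sigma> i = \<sigma> a" if "i \<in> I" for i
      using that \<open>I \<subseteq> J\<close> J_def by blast
    ultimately show ?thesis
      using \<open>J \<subseteq> A\<close> by (intro conjI exI[of _ I]) auto
  next
    case False
    with minor have "permanent (A - {a}) (\<lambda>i j. \<sigma> j (x i)) = 0" for x
      by simp
    with remove.IH[OF a] remove.prems(1) show ?thesis
      by blast
  qed
qed

theorem lemma3p1:
  fixes \<sigma> :: "nat \<Rightarrow> 'k::field \<Rightarrow> 'l::field" and n :: nat
  assumes mono: "\<And>i. i \<in> {1..n} \<Longrightarrow> field_mono (\<sigma> i)"
    and vanish: "\<And>x :: nat \<Rightarrow> 'k.
        (\<Sum>g | g permutes {1..n}. \<Prod>i = 1..n. \<sigma> (g i) (x i)) = 0"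
  shows "CHAR('k) > 0 \<and>
    (\<exists>I \<subseteq> {1..n}. card I = CHAR('k) \<and> (\<forall>i \<in> I. \<forall>j \<in> I. \<sigma> i = \<sigma> j))"
  using mono vanish
  by (intro permanent_of_embeddings_eq_0_imp_repeated) (simp_all add: permanent_def)

end
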